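(* Let $X$ be a simplicial complex and let $\gamma$ be an $i$-non-skipping simple cycle in $X$. Then any test for list agreement of $1$-dimensional $2$-assignments on $X$ must perform at least $|\gamma|/i$ queries.
   Context: A $1$-dimensional $2$-assignment on $X$ gives each edge $e\in X(1)$ two functions $L^e_1,L^e_2:e\to\{0,1\}$; it is agreeing if there are $g_1,g_2:X(0)\to\{0,1\}$ and for each edge a permutation $\pi_e$ of $\{1,2\}$ with $L^e_{\pi_e(i)}=g_i|_e$. A query is an edge and returns both local functions on it. A test for list agreement is a randomized, possibly adaptive algorithm that accepts every agreeing $2$-assignment with probability $1$ and rejects every non-agreeing one with positive probability (no locally-differing assumption is made). A simple cycle $\gamma=(\gamma_0,\dots,\gamma_{n-1})$ in the graph $(X(0),X(1))$ has length $|\gamma|=n$ (indices mod $n$); $\mathrm{dist}_\gamma$ is the distance along the cycle. An edge $e=\{\gamma_a,\gamma_b\}\in X(1)$ skips the cycle edge $\{\gamma_c,\gamma_{c+1}\}$ if $\mathrm{dist}_\gamma(\gamma_a,\gamma_b)=\mathrm{dist}_\gamma(\gamma_a,\gamma_c)+\mathrm{dist}_\gamma(\gamma_{c+1},\gamma_b)+1$ (i.e. the cycle edge lies on a shortest arc of $\gamma$ between the endpoints of $e$). $\gamma$ is $i$-non-skipping if every edge of $X$ with both endpoints on $\gamma$ skips at most $i$ cycle edges. *)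

theory Defs
  imports "HOL-Probability.Probability"
begin

definition simp_complex :: "'v set set \<Rightarrow> bool" where
  "simp_complex X \<longleftrightarrow>
     (\<forall>s\<in>X. finite s) \<and> (\<forall>s\<in>X. \<forall>t. t \<subseteq> s \<longrightarrow> t \<noteq> {} \<longrightarrow> t \<in> X)"

definition verts :: "'v set set \<Rightarrow> 'v set" where
  "verts X = {v. {v} \<in> X}"

definition edges :: "'v set set \<Rightarrow> 'v set set" where
  "edges X = {e \<in> X. card e = 2}"

text \<open>A 2-assignment is a pair (L1, L2); on each edge e the local functions are
  L1 e and L2 e restricted to e (values outside e or on non-edges are irrelevant).\<close>
type_synonym 'v assignment = "('v set \<Rightarrow> 'v \<Rightarrow> bool) \<times> ('v set \<Rightarrow> 'v \<Rightarrow> bool)"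

definition agreeing :: "'v set set \<Rightarrow> 'v assignment \<Rightarrow> bool" where
  "agreeing X L \<longleftrightarrow>
     (\<exists>g1 g2 :: 'v \<Rightarrow> bool. \<forall>e\<in>edges X.
        (\<forall>v\<in>e. fst L e v = g1 v \<and> snd L e v = g2 v) \<or>
        (\<forall>v\<in>e. fst L e v = g2 v \<and> snd L e v = g1 v))"

definition answer :: "'v assignment \<Rightarrow> 'v set \<Rightarrow> ('v \<Rightarrow> bool) \<times> ('v \<Rightarrow> bool)" where
  "answer L e = ((\<lambda>v. if v \<in> e then fst L e v else False),
                 (\<lambda>v. if v \<in> e then snd L e v else False))"

datatype 'v qtree =
    Decide bool
  | Query "'v set" "('v \<Rightarrow> bool) \<times> ('v \<Rightarrow> bool) \<Rightarrow> 'v qtree"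

primrec run :: "'v qtree \<Rightarrow> 'v assignment \<Rightarrow> bool" where
  "run (Decide b) L = b"
| "run (Query e f) L = run (f (answer L e)) L"

primrec nqueries :: "'v qtree \<Rightarrow> 'v assignment \<Rightarrow> nat" where
  "nqueries (Decide b) L = 0"
| "nqueries (Query e f) L = Suc (nqueries (f (answer L e)) L)"

primrec valid_tree :: "'v set set \<Rightarrow> 'v qtree \<Rightarrow> bool" where
  "valid_tree X (Decide b) = True"
| "valid_tree X (Query e f) = (e \<in> edges X \<and> (\<forall>a. valid_tree X (f a)))"

text \<open>A randomized adaptive test = probability distribution over deterministic
  adaptive algorithms querying edges of X.\<close>
definition list_agreement_test :: "'v set set \<Rightarrow> 'v qtree pmf \<Rightarrow> bool" where
  "list_agreement_test X T \<longleftrightarrow>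
     (\<forall>t\<in>set_pmf T. valid_tree X t) \<and>
     (\<forall>L. agreeing X L \<longrightarrow> measure_pmf.prob T {t. run t L} = 1) \<and>
     (\<forall>L. \<not> agreeing X L \<longrightarrow> measure_pmf.prob T {t. \<not> run t L} > 0)"

definition max_queries :: "'v qtree pmf \<Rightarrow> nat \<Rightarrow> bool" where
  "max_queries T q \<longleftrightarrow> (\<forall>t\<in>set_pmf T. \<forall>L. nqueries t L \<le> q)"

definition simple_cycle :: "'v set set \<Rightarrow> 'v list \<Rightarrow> bool" where
  "simple_cycle X \<gamma> \<longleftrightarrow> distinct \<gamma> \<and> length \<gamma> \<ge> 3 \<and> set \<gamma> \<subseteq> verts X \<and>
     (\<forall>k < length \<gamma>. {\<gamma> ! k, \<gamma> ! ((k + 1) mod length \<gamma>)} \<in> edges X)"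

definition cdist :: "nat \<Rightarrow> nat \<Rightarrow> nat \<Rightarrow> nat" where
  "cdist n a b = min ((a + n - b) mod n) ((b + n - a) mod n)"

definition skips :: "'v list \<Rightarrow> 'v set \<Rightarrow> nat \<Rightarrow> bool" where
  "skips \<gamma> e c \<longleftrightarrow> (let n = length \<gamma> in
     \<exists>a<n. \<exists>b<n. e = {\<gamma> ! a, \<gamma> ! b} \<and>
       cdist n a b = cdist n a c + cdist n ((c + 1) mod n) b + 1)"

definition non_skipping :: "'v set set \<Rightarrow> 'v list \<Rightarrow> nat \<Rightarrow> bool" where
  "non_skipping X \<gamma> i \<longleftrightarrow>
     (\<forall>e\<in>edges X. e \<subseteq> set \<gamma> \<longrightarrow> card {c. c < length \<gamma> \<and> skips \<gamma> e c} \<le> i)"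

end

theory Submission
  imports Defs
begin

(*
  Adversary argument. Let n be the length of the cycle and call an edge of X with both ends on
  the cycle wrapping if its shorter arc passes through the closing cycle edge
  {gamma_(n-1), gamma_0}. The twisted assignment puts the pair (0, 1) on the cycle vertices of
  every edge, except that the first function of a wrapping edge is 1 at its later endpoint. It is
  not agreeing: a global g1 would be constant along the path gamma_0, ..., gamma_(n-1) but differ
  on the closing edge. Cutting the cycle at another edge {gamma_c, gamma_(c+1)} instead gives the
  agreeing assignment whose two functions are the arcs gamma_0..gamma_c and
  gamma_(c+1)..gamma_(n-1); on every edge that does not skip {gamma_c, gamma_(c+1)} it coincides
  with the twisted one up to the order of the pair. A run rejecting the twisted assignment queries
  at most q edges, which skip at most q * i cycle edges; if q * i < n some cut is skipped by none
  of them, and the run cannot tell the twisted assignment from the agreeing one, which the test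
  has to accept with probability 1. Only the graph (X(0), X(1)) is used, not the higher faces.
*)

definition matches_on :: "'v assignment \<Rightarrow> ('v \<Rightarrow> bool) \<Rightarrow> ('v \<Rightarrow> bool) \<Rightarrow> 'v set \<Rightarrow> bool" where
  "matches_on L g1 g2 e \<longleftrightarrow>
     (\<forall>v\<in>e. fst L e v = g1 v \<and> snd L e v = g2 v) \<or> (\<forall>v\<in>e. fst L e v = g2 v \<and> snd L e v = g1 v)"

lemma agreeing_iff_matches_on: "agreeing X L \<longleftrightarrow> (\<exists>g1 g2. \<forall>e\<in>edges X. matches_on L g1 g2 e)"
  by (simp add: agreeing_def matches_on_def)

lemma matches_on_doubleton_eq_iff:
  assumes "matches_on L g1 g2 {u, w}"
    and "\<forall>v\<in>{u, w}. snd L {u, w} v \<longleftrightarrow> \<not> fst L {u, w} v"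
  shows "g1 u = g1 w \<longleftrightarrow> fst L {u, w} u = fst L {u, w} w"
  using assms unfolding matches_on_def by auto

lemma agreeing_with_same_answers:
  assumes "\<forall>e\<in>Q. matches_on L g1 g2 e"
  obtains L' where "agreeing X L'" "\<forall>e\<in>Q. answer L' e = answer L e"
proof
  define swapped where "swapped e \<longleftrightarrow> (\<forall>v\<in>e. fst L e v = g2 v \<and> snd L e v = g1 v)" for e
  define L' where "L' = ((\<lambda>e. if swapped e then g2 else g1), (\<lambda>e. if swapped e then g1 else g2))"
  show "agreeing X L'"
    unfolding agreeing_def L'_def by (rule exI[of _ g1], rule exI[of _ g2]) auto
  show "\<forall>e\<in>Q. answer L' e = answer L e"
    using assms unfolding matches_on_def answer_def L'_def swapped_def by (auto simp: fun_eq_iff)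
qed

primrec queried :: "'v qtree \<Rightarrow> 'v assignment \<Rightarrow> 'v set set" where
  "queried (Decide b) L = {}"
| "queried (Query e f) L = insert e (queried (f (answer L e)) L)"

lemma finite_queried: "finite (queried t L)"
  by (induction t) auto

lemma card_queried_le_nqueries: "card (queried t L) \<le> nqueries t L"
  by (induction t) (auto simp: card_insert_if finite_queried intro: le_SucI)

lemma queried_subset_edges: "valid_tree X t \<Longrightarrow> queried t L \<subseteq> edges X"
  by (induction t) (auto, metis prod.collapse rangeI subsetD)

lemma run_cong_queried: "\<forall>e\<in>queried t L. answer L' e = answer L e \<Longrightarrow> run t L' = run t L"
  by (induction t) auto

lemma list_agreement_test_distinguishing_edges:
  assumes "list_agreement_test X T" and "max_queries T q" and "\<not> agreeing X L"
  obtains Q where "Q \<subseteq> edges X" "finite Q" "card Q \<le> q"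
    "\<And>L'. agreeing X L' \<Longrightarrow> \<exists>e\<in>Q. answer L' e \<noteq> answer L e"
proof -
  have "measure_pmf.prob T {t. \<not> run t L} \<noteq> 0"
    using assms(1,3) unfolding list_agreement_test_def by fastforce
  then obtain t where t: "t \<in> set_pmf T" "\<not> run t L"
    unfolding measure_pmf_zero_iff by blast
  have "run t L'" if "agreeing X L'" for L'
  proof -
    have "measure_pmf.prob T {t. run t L'} = 1"
      using assms(1) that unfolding list_agreement_test_def by blast
    then have "\<forall>t\<in>set_pmf T. run t L'"
      by (subst (asm) measure_pmf.prob_eq_1) (auto simp: AE_measure_pmf_iff)
    with t(1) show ?thesis by blast
  qed
  then have "\<exists>e\<in>queried t L. answer L' e \<noteq> answer L e" if "agreeing X L'" for L'
    using run_cong_queried[of t L L'] t(2) that by blast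
  moreover have "card (queried t L) \<le> q"
    using card_queried_le_nqueries[of t L] assms(2) t(1) unfolding max_queries_def by (meson order_trans)
  moreover have "queried t L \<subseteq> edges X"
    using queried_subset_edges assms(1) t(1) unfolding list_agreement_test_def by blast
  ultimately show ?thesis
    using that finite_queried by blast
qed

lemma list_agreement_test_unmatched_query:
  assumes "list_agreement_test X T" and "max_queries T q" and "\<not> agreeing X L"
  obtains Q where "Q \<subseteq> edges X" "finite Q" "card Q \<le> q"
    "\<And>g1 g2. \<exists>e\<in>Q. \<not> matches_on L g1 g2 e"
proof -
  obtain Q where Q: "Q \<subseteq> edges X" "finite Q" "card Q \<le> q"
    and detects: "\<And>L'. agreeing X L' \<Longrightarrow> \<exists>e\<in>Q. answer L' e \<noteq> answer L e"
    using list_agreement_test_distinguishing_edges[OF assms] by blast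
  have "\<exists>e\<in>Q. \<not> matches_on L g1 g2 e" for g1 g2
    by (metis agreeing_with_same_answers detects)
  with Q that show ?thesis by blast
qed

lemma ex_less_notin_small_sets:
  assumes "finite Q" "\<And>e. e \<in> Q \<Longrightarrow> S e \<subseteq> {..<n}" "\<And>e. e \<in> Q \<Longrightarrow> card (S e) \<le> k"
    and "card Q * k < n"
  obtains c where "c < n" "\<And>e. e \<in> Q \<Longrightarrow> c \<notin> S e"
proof -
  let ?U = "\<Union>e\<in>Q. S e"
  have "card ?U \<le> (\<Sum>e\<in>Q. card (S e))"
    using card_UN_le[OF assms(1)] .
  also have "\<dots> \<le> card Q * k"
    using sum_bounded_above[of Q "\<lambda>e. card (S e)" k] assms(3) by simp
  finally have "card ?U < card {..<n}"
    using assms(4) by simp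
  moreover have "?U \<subseteq> {..<n}"
    using assms(2) by (rule UN_least)
  ultimately have "?U \<noteq> {..<n}"
    by auto
  with \<open>?U \<subseteq> {..<n}\<close> obtain c where "c < n" "c \<notin> ?U"
    by blast
  then show ?thesis
    by (intro that) auto
qed

lemma doubleton_nth_eq_iff:
  assumes "distinct \<gamma>" "a < b" "b < length \<gamma>" "a' < b'" "b' < length \<gamma>"
  shows "{\<gamma> ! a', \<gamma> ! b'} = {\<gamma> ! a, \<gamma> ! b} \<longleftrightarrow> a' = a \<and> b' = b"
  using assms by (auto simp: doubleton_eq_iff nth_eq_iff_index_eq)

lemma card_2_subset_set_conv_nth:
  assumes "card e = 2" "e \<subseteq> set \<gamma>"
  obtains a b where "a < b" "b < length \<gamma>" "e = {\<gamma> ! a, \<gamma> ! b}"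
proof -
  obtain x y where "x \<noteq> y" "e = {x, y}"
    using assms(1) by (auto simp: card_2_iff)
  moreover obtain i j where "i < length \<gamma>" "j < length \<gamma>" "x = \<gamma> ! i" "y = \<gamma> ! j"
    using assms(2) \<open>e = {x, y}\<close> by (auto simp: in_set_conv_nth)
  ultimately show ?thesis
    using that by (metis insert_commute linorder_neqE_nat)
qed

lemma nth_in_set_take_iff:
  assumes "distinct \<gamma>" "k < length \<gamma>"
  shows "\<gamma> ! k \<in> set (take m \<gamma>) \<longleftrightarrow> k < m"
  using assms by (auto simp: in_set_conv_nth nth_eq_iff_index_eq)

lemma in_set_drop_iff_not_in_set_take:
  assumes "distinct \<gamma>"
  shows "v \<in> set (drop m \<gamma>) \<longleftrightarrow> v \<in> set \<gamma> \<and> v \<notin> set (take m \<gamma>)"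
proof -
  have "set \<gamma> = set (take m \<gamma>) \<union> set (drop m \<gamma>)"
    by (metis append_take_drop_id set_append)
  moreover have "set (take m \<gamma>) \<inter> set (drop m \<gamma>) = {}"
    using set_take_disj_set_drop_if_distinct[OF assms order_refl] .
  ultimately show ?thesis
    by blast
qed

definition fwd_dist :: "nat \<Rightarrow> nat \<Rightarrow> nat \<Rightarrow> nat" where
  "fwd_dist n a b = (b + n - a) mod n"

lemma fwd_dist_eq: "a < n \<Longrightarrow> b < n \<Longrightarrow> fwd_dist n a b = (if a \<le> b then b - a else b + n - a)"
  by (auto simp: fwd_dist_def mod_if)

lemma cdist_eq_fwd_dist:
  assumes "a < n" "b < n" "2 * fwd_dist n a b \<le> n"
  shows "cdist n a b = fwd_dist n a b"
  using assms unfolding cdist_def fwd_dist_def[symmetric] by (auto simp: fwd_dist_eq)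

lemma fwd_dist_split:
  assumes "a < n" "b < n" "c < n" "fwd_dist n a c < fwd_dist n a b"
  shows "fwd_dist n a c + fwd_dist n (Suc c mod n) b + 1 = fwd_dist n a b"
  using assms by (auto simp: fwd_dist_eq mod_if split: if_splits)

lemma skips_on_shortest_arc:
  assumes "a < length \<gamma>" "b < length \<gamma>" "c < length \<gamma>"
    and "2 * fwd_dist (length \<gamma>) a b \<le> length \<gamma>"
    and "fwd_dist (length \<gamma>) a c < fwd_dist (length \<gamma>) a b"
  shows "skips \<gamma> {\<gamma> ! a, \<gamma> ! b} c"
proof -
  let ?n = "length \<gamma>"
  have split: "fwd_dist ?n a c + fwd_dist ?n (Suc c mod ?n) b + 1 = fwd_dist ?n a b"
    using fwd_dist_split assms by blast
  have "cdist ?n a c = fwd_dist ?n a c"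
    using assms by (intro cdist_eq_fwd_dist) auto
  moreover have "cdist ?n (Suc c mod ?n) b = fwd_dist ?n (Suc c mod ?n) b"
    using assms split by (intro cdist_eq_fwd_dist) (auto intro: mod_less_divisor)
  ultimately have "cdist ?n a b = cdist ?n a c + cdist ?n (Suc c mod ?n) b + 1"
    using split assms by (simp add: cdist_eq_fwd_dist)
  then show ?thesis
    unfolding skips_def Let_def using assms(1,2) by auto
qed

lemma wraps_iff_inside_if_not_skips:
  assumes "a < b" "b < length \<gamma>" "c < length \<gamma>" "\<not> skips \<gamma> {\<gamma> ! a, \<gamma> ! b} c"
  shows "length \<gamma> < 2 * (b - a) \<longleftrightarrow> a \<le> c \<and> c < b"
proof
  assume wraps: "length \<gamma> < 2 * (b - a)"
  show "a \<le> c \<and> c < b"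
  proof (rule ccontr)
    assume "\<not> (a \<le> c \<and> c < b)"
    then have "skips \<gamma> {\<gamma> ! b, \<gamma> ! a} c"
      using assms wraps by (intro skips_on_shortest_arc) (auto simp: fwd_dist_eq)
    with assms(4) show False by (simp add: insert_commute)
  qed
next
  assume inside: "a \<le> c \<and> c < b"
  show "length \<gamma> < 2 * (b - a)"
  proof (rule ccontr)
    assume "\<not> length \<gamma> < 2 * (b - a)"
    then have "skips \<gamma> {\<gamma> ! a, \<gamma> ! b} c"
      using assms inside by (intro skips_on_shortest_arc) (auto simp: fwd_dist_eq)
    with assms(4) show False by simp
  qed
qed

lemma card_skipped_cycle_edges_le:
  assumes "non_skipping X \<gamma> i" "e \<in> edges X"
  shows "card {c. c < length \<gamma> \<and> skips \<gamma> e c} \<le> i"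
proof (cases "e \<subseteq> set \<gamma>")
  case True
  then show ?thesis
    using assms unfolding non_skipping_def by blast
next
  case False
  then have "{c. c < length \<gamma> \<and> skips \<gamma> e c} = {}"
    unfolding skips_def Let_def by auto
  then show ?thesis
    by (metis card.empty le0)
qed

(* The strictly shorter arc between gamma_a and gamma_b passes through the closing edge, and v = gamma_b. *)
definition wrapping_end :: "'v list \<Rightarrow> 'v set \<Rightarrow> 'v \<Rightarrow> bool" where
  "wrapping_end \<gamma> e v \<longleftrightarrow>
     (\<exists>a b. a < b \<and> b < length \<gamma> \<and> length \<gamma> < 2 * (b - a) \<and> e = {\<gamma> ! a, \<gamma> ! b} \<and> v = \<gamma> ! b)"

definition twisted_assignment :: "'v list \<Rightarrow> 'v assignment" where
  "twisted_assignment \<gamma> = (wrapping_end \<gamma>, \<lambda>e v. v \<in> set \<gamma> \<and> \<not> wrapping_end \<gamma> e v)"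

lemma wrapping_end_subset: "wrapping_end \<gamma> e v \<Longrightarrow> e \<subseteq> set \<gamma>"
  by (auto simp: wrapping_end_def)

lemma wrapping_end_nth:
  assumes "distinct \<gamma>" "a < b" "b < length \<gamma>"
  shows "\<not> wrapping_end \<gamma> {\<gamma> ! a, \<gamma> ! b} (\<gamma> ! a)"
    and "wrapping_end \<gamma> {\<gamma> ! a, \<gamma> ! b} (\<gamma> ! b) \<longleftrightarrow> length \<gamma> < 2 * (b - a)"
  using assms by (auto simp: wrapping_end_def doubleton_nth_eq_iff nth_eq_iff_index_eq)

lemma twisted_assignment_not_agreeing:
  assumes "simple_cycle X \<gamma>"
  shows "\<not> agreeing X (twisted_assignment \<gamma>)"
proof
  let ?n = "length \<gamma>" and ?L = "twisted_assignment \<gamma>"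
  have distinct: "distinct \<gamma>" and n3: "3 \<le> ?n"
    and cycle_edge: "\<And>k. k < ?n \<Longrightarrow> {\<gamma> ! k, \<gamma> ! (Suc k mod ?n)} \<in> edges X"
    using assms unfolding simple_cycle_def by auto
  assume "agreeing X ?L"
  then obtain g1 g2 where match: "\<And>e. e \<in> edges X \<Longrightarrow> matches_on ?L g1 g2 e"
    unfolding agreeing_iff_matches_on by blast
  have flip: "g1 (\<gamma> ! a) = g1 (\<gamma> ! b) \<longleftrightarrow> \<not> ?n < 2 * (b - a)"
    if "a < b" "b < ?n" "{\<gamma> ! a, \<gamma> ! b} \<in> edges X" for a b
    using matches_on_doubleton_eq_iff[OF match[OF that(3)]] wrapping_end_nth[OF distinct that(1,2)]
      that by (simp add: twisted_assignment_def)
  have "g1 (\<gamma> ! k) = g1 (\<gamma> ! 0)" if "k < ?n" for k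
    using that
  proof (induction k)
    case (Suc k)
    then have "{\<gamma> ! k, \<gamma> ! Suc k} \<in> edges X"
      using cycle_edge[of k] by simp
    with Suc n3 show ?case
      using flip[of k "Suc k"] by simp
  qed simp
  moreover have "Suc (?n - 1) = ?n"
    using n3 by arith
  then have "{\<gamma> ! 0, \<gamma> ! (?n - 1)} \<in> edges X"
    using cycle_edge[of "?n - 1"] n3 by (simp add: insert_commute)
  then have "g1 (\<gamma> ! 0) \<noteq> g1 (\<gamma> ! (?n - 1))"
    using flip[of 0 "?n - 1"] n3 by simp
  ultimately show False
    using n3 by simp
qed

lemma twisted_assignment_matches_cut:
  assumes "distinct \<gamma>" "card e = 2" "c < length \<gamma>" "e \<subseteq> set \<gamma> \<Longrightarrow> \<not> skips \<gamma> e c"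
  shows "matches_on (twisted_assignment \<gamma>)
           (\<lambda>v. v \<in> set (take (Suc c) \<gamma>)) (\<lambda>v. v \<in> set (drop (Suc c) \<gamma>)) e"
proof (cases "e \<subseteq> set \<gamma>")
  case True
  let ?L = "twisted_assignment \<gamma>"
  obtain a b where ab: "a < b" "b < length \<gamma>" and e: "e = {\<gamma> ! a, \<gamma> ! b}"
    using assms(2) True card_2_subset_set_conv_nth by metis
  have "\<not> skips \<gamma> {\<gamma> ! a, \<gamma> ! b} c"
    using assms(4) True unfolding e .
  then have "length \<gamma> < 2 * (b - a) \<longleftrightarrow> a \<le> c \<and> c < b"
    by (rule wraps_iff_inside_if_not_skips[OF ab assms(3)])
  then have "fst ?L e (\<gamma> ! a) \<longleftrightarrow> False" "snd ?L e (\<gamma> ! a)"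
    and "fst ?L e (\<gamma> ! b) \<longleftrightarrow> a \<le> c \<and> c < b" "snd ?L e (\<gamma> ! b) \<longleftrightarrow> \<not> (a \<le> c \<and> c < b)"
    using wrapping_end_nth[OF assms(1) ab] ab unfolding e twisted_assignment_def by auto
  moreover have "\<gamma> ! k \<in> set (take (Suc c) \<gamma>) \<longleftrightarrow> k \<le> c"
    and "\<gamma> ! k \<in> set (drop (Suc c) \<gamma>) \<longleftrightarrow> c < k" if "k < length \<gamma>" for k
    using nth_in_set_take_iff[OF assms(1) that] in_set_drop_iff_not_in_set_take[OF assms(1)] that
    by auto
  ultimately show ?thesis
    unfolding matches_on_def e using ab by auto
next
  case False
  then have "\<not> wrapping_end \<gamma> e v" for v
    by (meson wrapping_end_subset)
  moreover obtain u w where e: "e = {u, w}"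
    using assms(2) by (auto simp: card_2_iff)
  moreover have "u \<notin> set \<gamma> \<or> w \<notin> set \<gamma>"
    using False e by auto
  ultimately show ?thesis
    unfolding matches_on_def twisted_assignment_def in_set_drop_iff_not_in_set_take[OF assms(1)]
    by (auto dest: in_set_takeD)
qed

lemma twisted_assignment_matches_some_cut:
  assumes "distinct \<gamma>" "non_skipping X \<gamma> i"
    and "Q \<subseteq> edges X" "finite Q" "card Q * i < length \<gamma>"
  obtains g1 g2 where "\<forall>e\<in>Q. matches_on (twisted_assignment \<gamma>) g1 g2 e"
proof -
  obtain c where c: "c < length \<gamma>"
    and unskipped: "\<And>e. e \<in> Q \<Longrightarrow> c \<notin> {c. c < length \<gamma> \<and> skips \<gamma> e c}"
  proof (rule ex_less_notin_small_sets[OF assms(4)])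
    show "card {c. c < length \<gamma> \<and> skips \<gamma> e c} \<le> i" if "e \<in> Q" for e
      using card_skipped_cycle_edges_le[OF assms(2)] assms(3) that by blast
  qed (use assms(5) in auto)
  have "matches_on (twisted_assignment \<gamma>)
          (\<lambda>v. v \<in> set (take (Suc c) \<gamma>)) (\<lambda>v. v \<in> set (drop (Suc c) \<gamma>)) e" if "e \<in> Q" for e
  proof (rule twisted_assignment_matches_cut[OF assms(1) _ c])
    show "card e = 2"
      using assms(3) that by (auto simp: edges_def)
    show "\<not> skips \<gamma> e c"
      using unskipped[OF that] c by simp
  qed
  then show ?thesis
    using that by blast
qed

theorem mainTheorem9:
  fixes X :: "'v set set" and \<gamma> :: "'v list" and i q :: nat and T :: "'v qtree pmf"
  assumes "simp_complex X"
    and "simple_cycle X \<gamma>"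
    and "non_skipping X \<gamma> i"
    and "list_agreement_test X T"
    and "max_queries T q"
  shows "real (length \<gamma>) / real i \<le> real q"
proof -
  have "length \<gamma> \<le> q * i"
  proof (rule ccontr)
    assume "\<not> length \<gamma> \<le> q * i"
    obtain Q where Q: "Q \<subseteq> edges X" "finite Q" "card Q \<le> q"
      and unmatched: "\<And>g1 g2. \<exists>e\<in>Q. \<not> matches_on (twisted_assignment \<gamma>) g1 g2 e"
      using list_agreement_test_unmatched_query[OF assms(4,5) twisted_assignment_not_agreeing[OF assms(2)]]
      by metis
    have "card Q * i \<le> q * i"
      using Q(3) by (rule mult_le_mono1)
    with \<open>\<not> length \<gamma> \<le> q * i\<close> have "card Q * i < length \<gamma>"
      by linarith
    moreover have "distinct \<gamma>"
      using assms(2) unfolding simple_cycle_def by blast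
    ultimately obtain g1 g2 where "\<forall>e\<in>Q. matches_on (twisted_assignment \<gamma>) g1 g2 e"
      using twisted_assignment_matches_some_cut[OF _ assms(3) Q(1,2)] by metis
    with unmatched show False
      by blast
  qed
  then show ?thesis
    by (cases "i = 0") (simp_all add: divide_le_eq flip: of_nat_mult)
qed

end
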